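(* Let $V$ be a Banach $\mathbb O$-bimodule and $T\in\mathscr B_{\mathcal{RO}}(V)$. The following are equivalent: (1) $[T,T^{\circledcirc n},x]_{\circledcirc}=0$ for all $x\in V$ and all $n=0,1,2,\dots$; (2) $T^n\in\mathscr B_{\mathcal{RO}}(V)$ for all $n=0,1,2,\dots$; (3) $[T^{n\circledcirc},T,x]_{\circledcirc}=0$ for all $x\in V$ and all $n=0,1,2,\dots$. Moreover, under any of these conditions $T^{\circledcirc n}=T^n=T^{n\circledcirc}$ for all $n$, and hence $T^n\circledcirc T^m=T^{n+m}$.
   Context: $\mathbb O$ is the real octonion algebra with basis $e_0=1,\dots,e_7$ and conjugation $\bar x$. An $\mathbb O$-bimodule is a real vector space $M$ with real-bilinear left and right multiplications by $\mathbb O$ (with $1x=x1=x$) whose associators $[p,q,x]=(pq)x-p(qx)$, $[p,x,q]=(px)q-p(xq)$, $[x,p,q]=(xp)q-x(pq)$ satisfy $[p,q,x]=[q,x,p]=[x,p,q]=-[q,p,x]$. Its real part is $\operatorname{Re}M=\{m: pm=mp,\ [p,q,m]=0\ \forall p,q\}$; every $x$ decomposes uniquely as $x=\sum_{i=0}^7e_ix_i$ with $x_i\in\operatorname{Re}M$ and $\operatorname{Re}x:=x_0$. A Banach $\mathbb O$-bimodule is one with a complete norm with $\|px\|=\|xp\|=|p|\|x\|$. $\mathscr B_{\mathbb R}(V)$: bounded real-linear operators, powers $T^n$ by ordinary composition, $T^0=\mathcal I$. For real-linear $f$, $B_p(f,x)=f(x)p-f(xp)$; $f$ is right para-linear if $\operatorname{Re}B_p(f,x)=0$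 for all $p\in\mathbb O,x$; $\mathscr B_{\mathcal{RO}}(V)$ is the set of bounded right para-linear operators. For real-linear $h:\operatorname{Re}V\to V$, $(\operatorname{ext}h)(\sum_ix_ie_i)=\sum_ih(x_i)e_i$ ($x_i\in\operatorname{Re}V$); for real-linear $h:V\to\operatorname{Re}V$, $(\operatorname{lif}h)(x)=\sum_{i=0}^7h(x\bar e_i)e_i$. $T^{\circledcirc n}=\operatorname{ext}(T^n|_{\operatorname{Re}V})$, $T^{n\circledcirc}=\operatorname{lif}(\operatorname{Re}\circ T^n)$. For $f,g\in\mathscr B_{\mathcal{RO}}(V)$: $f\circledcirc g=\operatorname{ext}((f\circ g)|_{\operatorname{Re}V})$ (equivalently $\operatorname{lif}(\operatorname{Re}\circ f\circ g)$) and $[f,g,x]_{\circledcirc}=(f\circledcirc g)(x)-f(g(x))$. *)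

theory Defs
  imports "HOL-Analysis.Analysis"
begin

text \<open>Quaternions as pairs of complex numbers, octonions as pairs of quaternions.
  The product types carry the real vector space structure and the Euclidean
  norm from HOL-Analysis (Product_Vector).\<close>

type_synonym quat = "complex \<times> complex"
type_synonym oct = "quat \<times> quat"

definition qmul :: "quat \<Rightarrow> quat \<Rightarrow> quat" where
  "qmul x y = (case x of (a, b) \<Rightarrow> case y of (c, d) \<Rightarrow>
      (a * c - cnj d * b, d * a + b * cnj c))"

definition qcnj :: "quat \<Rightarrow> quat" where
  "qcnj x = (case x of (a, b) \<Rightarrow> (cnj a, - b))"

definition omul :: "oct \<Rightarrow> oct \<Rightarrow> oct" where
  "omul x y = (case x of (a, b) \<Rightarrow> case y of (c, d) \<Rightarrow>
      (qmul a c - qmul (qcnj d) b, qmul d a + qmul b (qcnj c)))"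

definition ocnj :: "oct \<Rightarrow> oct" where
  "ocnj x = (case x of (a, b) \<Rightarrow> (qcnj a, - b))"

definition qbasis :: "nat \<Rightarrow> quat" where
  "qbasis i = (if i = 0 then (1, 0) else if i = 1 then (\<i>, 0)
               else if i = 2 then (0, 1) else (0, \<i>))"

text \<open>The standard basis e_0 = 1, e_1, ..., e_7 (meaningful for i < 8).\<close>
definition obasis :: "nat \<Rightarrow> oct" where
  "obasis i = (if i < 4 then (qbasis i, 0) else (0, qbasis (i - 4)))"

definition oone :: oct where "oone = obasis 0"

text \<open>L p x = p x (left multiplication), R x p = x p (right multiplication).\<close>

definition assocL :: "(oct \<Rightarrow> 'v::real_vector \<Rightarrow> 'v) \<Rightarrow> oct \<Rightarrow> oct \<Rightarrow> 'v \<Rightarrow> 'v" where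
  "assocL L p q x = L (omul p q) x - L p (L q x)"

definition assocM :: "(oct \<Rightarrow> 'v::real_vector \<Rightarrow> 'v) \<Rightarrow> ('v \<Rightarrow> oct \<Rightarrow> 'v) \<Rightarrow> oct \<Rightarrow> 'v \<Rightarrow> oct \<Rightarrow> 'v" where
  "assocM L R p x q = R (L p x) q - L p (R x q)"

definition assocR :: "('v::real_vector \<Rightarrow> oct \<Rightarrow> 'v) \<Rightarrow> 'v \<Rightarrow> oct \<Rightarrow> oct \<Rightarrow> 'v" where
  "assocR R x p q = R (R x p) q - R x (omul p q)"

definition oct_bimodule :: "(oct \<Rightarrow> 'v::real_vector \<Rightarrow> 'v) \<Rightarrow> ('v \<Rightarrow> oct \<Rightarrow> 'v) \<Rightarrow> bool" where
  "oct_bimodule L R \<longleftrightarrow>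
     (\<forall>p. linear (L p)) \<and> (\<forall>x. linear (\<lambda>p. L p x)) \<and>
     (\<forall>p. linear (\<lambda>x. R x p)) \<and> (\<forall>x. linear (R x)) \<and>
     (\<forall>x. L oone x = x \<and> R x oone = x) \<and>
     (\<forall>p q x. assocL L p q x = assocM L R q x p \<and>
              assocM L R q x p = assocR R x p q \<and>
              assocL L p q x = - assocL L q p x)"

definition banach_oct_bimodule :: "(oct \<Rightarrow> 'v::real_normed_vector \<Rightarrow> 'v) \<Rightarrow> ('v \<Rightarrow> oct \<Rightarrow> 'v) \<Rightarrow> bool" where
  "banach_oct_bimodule L R \<longleftrightarrow> oct_bimodule L R \<and>
     (\<forall>p x. norm (L p x) = norm p * norm x \<and> norm (R x p) = norm p * norm x)"

definition ReM :: "(oct \<Rightarrow> 'v::real_vector \<Rightarrow> 'v) \<Rightarrow> ('v \<Rightarrow> oct \<Rightarrow> 'v) \<Rightarrow> 'v set" where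
  "ReM L R = {m. (\<forall>p. L p m = R m p) \<and> (\<forall>p q. assocL L p q m = 0)}"

text \<open>Real coordinates: x = sum_{i<8} e_i x_i with x_i in Re M (unique).\<close>
definition re_coords :: "(oct \<Rightarrow> 'v::real_vector \<Rightarrow> 'v) \<Rightarrow> ('v \<Rightarrow> oct \<Rightarrow> 'v) \<Rightarrow> 'v \<Rightarrow> nat \<Rightarrow> 'v" where
  "re_coords L R x = (THE c. (\<forall>i<8. c i \<in> ReM L R) \<and> (\<forall>i\<ge>8. c i = 0) \<and>
                        x = (\<Sum>i<8. L (obasis i) (c i)))"

definition ReV :: "(oct \<Rightarrow> 'v::real_vector \<Rightarrow> 'v) \<Rightarrow> ('v \<Rightarrow> oct \<Rightarrow> 'v) \<Rightarrow> 'v \<Rightarrow> 'v" where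
  "ReV L R x = re_coords L R x 0"

definition Bp :: "('v::real_vector \<Rightarrow> oct \<Rightarrow> 'v) \<Rightarrow> ('v \<Rightarrow> 'v) \<Rightarrow> oct \<Rightarrow> 'v \<Rightarrow> 'v" where
  "Bp R f p x = R (f x) p - f (R x p)"

definition right_para_linear :: "(oct \<Rightarrow> 'v::real_vector \<Rightarrow> 'v) \<Rightarrow> ('v \<Rightarrow> oct \<Rightarrow> 'v) \<Rightarrow> ('v \<Rightarrow> 'v) \<Rightarrow> bool" where
  "right_para_linear L R f \<longleftrightarrow> linear f \<and> (\<forall>p x. ReV L R (Bp R f p x) = 0)"

definition B_RO :: "(oct \<Rightarrow> 'v::real_normed_vector \<Rightarrow> 'v) \<Rightarrow> ('v \<Rightarrow> oct \<Rightarrow> 'v) \<Rightarrow> ('v \<Rightarrow> 'v) set" where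
  "B_RO L R = {f. bounded_linear f \<and> right_para_linear L R f}"

definition oext :: "(oct \<Rightarrow> 'v::real_vector \<Rightarrow> 'v) \<Rightarrow> ('v \<Rightarrow> oct \<Rightarrow> 'v) \<Rightarrow> ('v \<Rightarrow> 'v) \<Rightarrow> 'v \<Rightarrow> 'v" where
  "oext L R h x = (\<Sum>i<8. R (h (re_coords L R x i)) (obasis i))"

definition olif :: "(oct \<Rightarrow> 'v::real_vector \<Rightarrow> 'v) \<Rightarrow> ('v \<Rightarrow> oct \<Rightarrow> 'v) \<Rightarrow> ('v \<Rightarrow> 'v) \<Rightarrow> 'v \<Rightarrow> 'v" where
  "olif L R h x = (\<Sum>i<8. R (h (R x (ocnj (obasis i)))) (obasis i))"

text \<open>f \<circledcirc> g = ext((f o g)|Re V).\<close>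
definition ocomp :: "(oct \<Rightarrow> 'v::real_vector \<Rightarrow> 'v) \<Rightarrow> ('v \<Rightarrow> oct \<Rightarrow> 'v) \<Rightarrow> ('v \<Rightarrow> 'v) \<Rightarrow> ('v \<Rightarrow> 'v) \<Rightarrow> 'v \<Rightarrow> 'v" where
  "ocomp L R f g = oext L R (f \<circ> g)"

definition oassoc :: "(oct \<Rightarrow> 'v::real_vector \<Rightarrow> 'v) \<Rightarrow> ('v \<Rightarrow> oct \<Rightarrow> 'v) \<Rightarrow> ('v \<Rightarrow> 'v) \<Rightarrow> ('v \<Rightarrow> 'v) \<Rightarrow> 'v \<Rightarrow> 'v" where
  "oassoc L R f g x = ocomp L R f g x - f (g x)"

text \<open>T^{\<circledcirc> n} = ext(T^n|Re V) and T^{n \<circledcirc>} = lif(Re o T^n).\<close>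
definition pow_ext :: "(oct \<Rightarrow> 'v::real_vector \<Rightarrow> 'v) \<Rightarrow> ('v \<Rightarrow> oct \<Rightarrow> 'v) \<Rightarrow> ('v \<Rightarrow> 'v) \<Rightarrow> nat \<Rightarrow> 'v \<Rightarrow> 'v" where
  "pow_ext L R T n = oext L R (T ^^ n)"

definition pow_lif :: "(oct \<Rightarrow> 'v::real_vector \<Rightarrow> 'v) \<Rightarrow> ('v \<Rightarrow> oct \<Rightarrow> 'v) \<Rightarrow> ('v \<Rightarrow> 'v) \<Rightarrow> nat \<Rightarrow> 'v \<Rightarrow> 'v" where
  "pow_lif L R T n = olif L R (ReV L R \<circ> (T ^^ n))"

end

theory Submission
  imports Defs
begin

(* In every O-bimodule the
   operator Re x = (5x - \<Sum>_{i=1..7} e_i(x e_i))/12 projects onto Re V, and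
   x = \<Sum>_k e_k Re(conj(e_k) x). These are identities between left and right multiplications
   by basis elements that hold in every O-bimodule; each is proved by exhibiting it as an
   explicit combination of the defining associator relations (a certificate), checked by
   evaluation modulo the Clifford relations of the left multiplications, in one case after
   first rewriting right multiplications as combinations of left ones.

   With this decomposition, a real-linear f is right para-linear iff ext(f|Re V) = f, and
   lif(Re \<circ> f) = f whenever f is right para-linear. Since [f,g,x] = ext((f g)|Re V) x - f(g x),
   conditions (1) and (3) at n say, once T^n is right para-linear, exactly that T^(n+1) is, and
   induction on n gives the equivalences together with T^(\<circledcirc>n) = T^n = T^(n\<circledcirc>). *)

section \<open>The octonion multiplication table\<close>

definition mul_idx_table :: "nat list list" where
  "mul_idx_table = [[0,1,2,3,4,5,6,7],[1,0,3,2,5,4,7,6],[2,3,0,1,6,7,4,5],[3,2,1,0,7,6,5,4],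
    [4,5,6,7,0,1,2,3],[5,4,7,6,1,0,3,2],[6,7,4,5,2,3,0,1],[7,6,5,4,3,2,1,0]]"

definition mul_sign_table :: "int list list" where
  "mul_sign_table = [[1,1,1,1,1,1,1,1],[1,-1,1,-1,1,-1,-1,1],[1,-1,-1,1,1,1,-1,-1],[1,1,-1,-1,1,-1,1,-1],
    [1,-1,-1,-1,-1,1,1,1],[1,1,-1,1,-1,-1,-1,1],[1,1,1,-1,-1,1,-1,-1],[1,-1,1,1,-1,-1,1,-1]]"

text \<open>\<open>e\<^sub>a e\<^sub>b = \<plusminus>e\<^sub>c\<close> with \<open>c\<close> the bitwise exclusive or of \<open>a\<close> and \<open>b\<close>.\<close>

definition mul_idx :: "nat \<Rightarrow> nat \<Rightarrow> nat" where
  "mul_idx a b = mul_idx_table ! a ! b"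

definition mul_sign :: "nat \<Rightarrow> nat \<Rightarrow> int" where
  "mul_sign a b = mul_sign_table ! a ! b"

lemma less_8_iff: "(a::nat) < 8 \<longleftrightarrow> a = 0 \<or> a = 1 \<or> a = 2 \<or> a = 3 \<or> a = 4 \<or> a = 5 \<or> a = 6 \<or> a = 7"
  by auto

lemma list_all_upt_8D: "list_all P [0..<8] \<Longrightarrow> a < 8 \<Longrightarrow> P a"
  by (simp add: list_all_iff)

lemma sum_lessThan_8:
  "(\<Sum>k::nat<8. f k) = f 0 + f 1 + f 2 + f 3 + f 4 + f 5 + f 6 + (f 7 :: 'a::comm_monoid_add)"
  by (simp add: numeral_eq_Suc add_ac)

lemma omul_basis:
  assumes "a < 8" "b < 8"
  shows "omul (obasis a) (obasis b) = of_int (mul_sign a b) *\<^sub>R obasis (mul_idx a b)"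
  using assms unfolding less_8_iff
  by (elim disjE) (simp_all add: omul_def qmul_def qcnj_def obasis_def qbasis_def zero_prod_def
      mul_idx_def mul_sign_def mul_idx_table_def mul_sign_table_def)

lemma ocnj_basis: "i < 8 \<Longrightarrow> ocnj (obasis i) = of_int (mul_sign i i) *\<^sub>R obasis i"
  unfolding less_8_iff
  by (elim disjE) (simp_all add: ocnj_def qcnj_def obasis_def qbasis_def zero_prod_def
      mul_sign_def mul_sign_table_def)

lemma mul_idx_less: "a < 8 \<Longrightarrow> b < 8 \<Longrightarrow> mul_idx a b < 8"
proof -
  have "list_all (\<lambda>a. list_all (\<lambda>b. mul_idx a b < 8) [0..<8]) [0..<8]"
    by code_simp
  then show "a < 8 \<Longrightarrow> b < 8 \<Longrightarrow> mul_idx a b < 8"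
    by (blast dest: list_all_upt_8D)
qed

lemma mul_idx_eq_0_iff: "a < 8 \<Longrightarrow> b < 8 \<Longrightarrow> mul_idx a b = 0 \<longleftrightarrow> a = b"
proof -
  have "list_all (\<lambda>a. list_all (\<lambda>b. mul_idx a b = 0 \<longleftrightarrow> a = b) [0..<8]) [0..<8]"
    by code_simp
  then show "a < 8 \<Longrightarrow> b < 8 \<Longrightarrow> mul_idx a b = 0 \<longleftrightarrow> a = b"
    by (auto simp: list_all_iff)
qed

lemma mul_sign_diag: "k < 8 \<Longrightarrow> mul_sign k k = (if k = 0 then 1 else -1)"
  unfolding less_8_iff by (elim disjE) (simp_all add: mul_sign_def mul_sign_table_def)

lemma mul_sign_diag_sq: "k < 8 \<Longrightarrow> real_of_int (mul_sign k k) * real_of_int (mul_sign k k) = 1"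
  by (simp add: mul_sign_diag)

lemma omul_basis_anticommute:
  assumes "0 < a" "a < 8" "0 < b" "b < 8"
  shows "omul (obasis a) (obasis b) + omul (obasis b) (obasis a) = (if a = b then - 2 *\<^sub>R oone else 0)"
proof -
  have "list_all (\<lambda>a. list_all (\<lambda>b. 0 < a \<longrightarrow> 0 < b \<longrightarrow> mul_idx b a = mul_idx a b \<and>
      mul_sign a b + mul_sign b a = (if a = b then -2 else 0)) [0..<8]) [0..<8]"
    by code_simp
  then have "mul_idx b a = mul_idx a b" and "mul_sign a b + mul_sign b a = (if a = b then -2 else 0)"
    using assms by (blast dest: list_all_upt_8D)+
  moreover have "mul_idx a a = 0"
    using assms by (simp add: mul_idx_eq_0_iff)
  ultimately show ?thesis
    using assms by (auto simp: omul_basis oone_def scaleR_add_left[symmetric] simp flip: of_int_add)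
qed

definition ocoord :: "oct \<Rightarrow> nat \<Rightarrow> real" where
  "ocoord q k = [Re (fst (fst q)), Im (fst (fst q)), Re (snd (fst q)), Im (snd (fst q)),
                 Re (fst (snd q)), Im (fst (snd q)), Re (snd (snd q)), Im (snd (snd q))] ! k"

lemma oct_decomp: "q = (\<Sum>k<8. ocoord q k *\<^sub>R obasis k)"
proof -
  obtain a b c d where q: "q = ((a, b), (c, d))"
    by (metis prod.collapse)
  show ?thesis unfolding sum_lessThan_8
    by (simp add: q ocoord_def obasis_def qbasis_def scaleR_conv_of_real complex_eq_iff)
qed

lemma ocoord_scaleR: "k < 8 \<Longrightarrow> ocoord (r *\<^sub>R x) k = r * ocoord x k"
  unfolding less_8_iff by (elim disjE) (simp_all add: ocoord_def)

lemma ocoord_basis: "t < 8 \<Longrightarrow> k < 8 \<Longrightarrow> ocoord (obasis t) k = (if t = k then 1 else 0)"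
  unfolding less_8_iff by (elim disjE) (simp_all add: ocoord_def obasis_def qbasis_def)

lemma omul_scaleR_left: "omul (r *\<^sub>R x) y = r *\<^sub>R omul x y"
  by (cases x; cases y) (auto simp: omul_def qmul_def qcnj_def scaleR_conv_of_real algebra_simps)

lemma omul_scaleR_right: "omul x (r *\<^sub>R y) = r *\<^sub>R omul x y"
  by (cases x; cases y) (auto simp: omul_def qmul_def qcnj_def scaleR_conv_of_real algebra_simps)

lemma ocoord_0_omul_basis:
  "j < 8 \<Longrightarrow> k < 8 \<Longrightarrow> ocoord (omul (obasis j) (obasis k)) 0 = (if j = k then of_int (mul_sign k k) else 0)"
  by (simp add: omul_basis ocoord_scaleR ocoord_basis mul_idx_less mul_idx_eq_0_iff)

lemma ocoord_0_omul_assoc_basis: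
  assumes "j < 8" "i < 8" "k < 8"
  shows "ocoord (omul (omul (obasis j) (obasis i)) (obasis k)) 0
       = ocoord (omul (obasis j) (omul (obasis i) (obasis k))) 0"
proof -
  have "list_all (\<lambda>j. list_all (\<lambda>i. list_all (\<lambda>k.
      (if mul_idx (mul_idx j i) k = 0 then mul_sign j i * mul_sign (mul_idx j i) k else 0) =
      (if mul_idx j (mul_idx i k) = 0 then mul_sign i k * mul_sign j (mul_idx i k) else 0))
      [0..<8]) [0..<8]) [0..<8]"
    by code_simp
  then have table: "(if mul_idx (mul_idx j i) k = 0 then mul_sign j i * mul_sign (mul_idx j i) k else 0) =
      (if mul_idx j (mul_idx i k) = 0 then mul_sign i k * mul_sign j (mul_idx i k) else 0)"
    using assms by (blast dest: list_all_upt_8D)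
  have "ocoord (omul (omul (obasis j) (obasis i)) (obasis k)) 0
      = of_int (if mul_idx (mul_idx j i) k = 0 then mul_sign j i * mul_sign (mul_idx j i) k else 0)"
    using assms by (simp add: omul_basis omul_scaleR_left ocoord_scaleR ocoord_basis mul_idx_less)
  also have "\<dots> = of_int (if mul_idx j (mul_idx i k) = 0 then mul_sign i k * mul_sign j (mul_idx i k) else 0)"
    by (simp only: table)
  also have "\<dots> = ocoord (omul (obasis j) (omul (obasis i) (obasis k))) 0"
    using assms by (simp add: omul_basis omul_scaleR_right ocoord_scaleR ocoord_basis mul_idx_less mult.commute)
  finally show ?thesis .
qed

lemma basis_sandwich:
  assumes "t < 8"
  shows "\<forall>i\<in>{1..7}. mul_idx i (mul_idx t i) = t"
    and "(\<Sum>i\<in>{1..7}. mul_sign t i * mul_sign i (mul_idx t i)) = (if t = 0 then -7 else 5)"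
proof -
  have "list_all (\<lambda>t. list_all (\<lambda>i. mul_idx i (mul_idx t i) = t) [1..<8] \<and>
      sum_list (map (\<lambda>i. mul_sign t i * mul_sign i (mul_idx t i)) [1..<8]) = (if t = 0 then -7 else 5))
      [0..<8]"
    by code_simp
  moreover have "{1..7} = set [1..<8::nat]"
    by auto
  ultimately show "\<forall>i\<in>{1..7}. mul_idx i (mul_idx t i) = t"
    and "(\<Sum>i\<in>{1..7}. mul_sign t i * mul_sign i (mul_idx t i)) = (if t = 0 then -7 else 5)"
    using assms by (auto dest!: list_all_upt_8D simp: list_all_iff interv_sum_list_conv_sum_set_nat)
qed

section \<open>Formal words in left and right multiplications\<close>

text \<open>A letter \<open>a \<le> 7\<close> stands for left multiplication by \<open>e\<^sub>a\<close> (so \<open>0\<close> is the identity), a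
  letter \<open>a + 7\<close> with \<open>1 \<le> a \<le> 7\<close> for right multiplication by \<open>e\<^sub>a\<close>. A word acts by
  composition, its last letter first; a polynomial is a list of integer multiples of words.\<close>

definition letter_act :: "(oct \<Rightarrow> 'v::real_vector \<Rightarrow> 'v) \<Rightarrow> ('v \<Rightarrow> oct \<Rightarrow> 'v) \<Rightarrow> nat \<Rightarrow> 'v \<Rightarrow> 'v" where
  "letter_act L R a y = (if a \<le> 7 then L (obasis a) y else R y (obasis (a - 7)))"

primrec word_act :: "(oct \<Rightarrow> 'v::real_vector \<Rightarrow> 'v) \<Rightarrow> ('v \<Rightarrow> oct \<Rightarrow> 'v) \<Rightarrow> nat list \<Rightarrow> 'v \<Rightarrow> 'v" where
  "word_act L R [] y = y"
| "word_act L R (a # w) y = letter_act L R a (word_act L R w y)"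

type_synonym act_poly = "(int \<times> nat list) list"

definition poly_act :: "(oct \<Rightarrow> 'v::real_vector \<Rightarrow> 'v) \<Rightarrow> ('v \<Rightarrow> oct \<Rightarrow> 'v) \<Rightarrow> act_poly \<Rightarrow> 'v \<Rightarrow> 'v" where
  "poly_act L R p y = (\<Sum>(c, w)\<leftarrow>p. of_int c *\<^sub>R word_act L R w y)"

lemma poly_act_Nil [simp]: "poly_act L R [] y = 0"
  by (simp add: poly_act_def)

lemma poly_act_Cons [simp]: "poly_act L R ((c, w) # p) y = of_int c *\<^sub>R word_act L R w y + poly_act L R p y"
  by (simp add: poly_act_def)

lemma poly_act_append [simp]: "poly_act L R (p @ q) y = poly_act L R p y + poly_act L R q y"
  by (simp add: poly_act_def)

lemma word_act_append: "word_act L R (u @ v) y = word_act L R u (word_act L R v y)"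
  by (induct u) auto

definition poly_scale :: "int \<Rightarrow> act_poly \<Rightarrow> act_poly" where
  "poly_scale m p = map (\<lambda>(c, w). (m * c, w)) p"

definition poly_prefix :: "nat list \<Rightarrow> act_poly \<Rightarrow> act_poly" where
  "poly_prefix u p = map (\<lambda>(c, w). (c, u @ w)) p"

definition poly_suffix :: "nat list \<Rightarrow> act_poly \<Rightarrow> act_poly" where
  "poly_suffix v p = map (\<lambda>(c, w). (c, w @ v)) p"

definition poly_mult :: "act_poly \<Rightarrow> act_poly \<Rightarrow> act_poly" where
  "poly_mult p q = concat (map (\<lambda>(c, u). map (\<lambda>(d, v). (c * d, u @ v)) q) p)"

lemma poly_act_scale [simp]: "poly_act L R (poly_scale m p) y = of_int m *\<^sub>R poly_act L R p y"
  by (induct p) (auto simp: poly_scale_def scaleR_add_right)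

lemma poly_act_suffix: "poly_act L R (poly_suffix v p) y = poly_act L R p (word_act L R v y)"
  by (induct p) (auto simp: poly_suffix_def word_act_append)

fun word_le :: "nat list \<Rightarrow> nat list \<Rightarrow> bool" where
  "word_le [] v = True"
| "word_le (a # u) [] = False"
| "word_le (a # u) (b # v) = (a < b \<or> (a = b \<and> word_le u v))"

fun poly_merge :: "act_poly \<Rightarrow> act_poly \<Rightarrow> act_poly" where
  "poly_merge [] q = q"
| "poly_merge p [] = p"
| "poly_merge (x # p) (y # q) =
     (if word_le (snd x) (snd y) then x # poly_merge p (y # q) else y # poly_merge (x # p) q)"

lemma poly_act_merge: "poly_act L R (poly_merge p q) y = poly_act L R p y + poly_act L R q y"
  by (induct p q rule: poly_merge.induct) (auto simp: algebra_simps)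

fun merge_pairs :: "act_poly list \<Rightarrow> act_poly list" where
  "merge_pairs (a # b # r) = poly_merge a b # merge_pairs r"
| "merge_pairs r = r"

lemma length_merge_pairs: "length (merge_pairs l) \<le> length l"
  by (induct l rule: merge_pairs.induct) auto

function merge_all :: "act_poly list \<Rightarrow> act_poly" where
  "merge_all [] = []"
| "merge_all [p] = p"
| "merge_all (a # b # r) = merge_all (merge_pairs (a # b # r))"
  by pat_completeness auto
termination
  by (relation "Wellfounded.measure length") (auto intro: le_imp_less_Suc length_merge_pairs)

lemma poly_act_merge_pairs: "(\<Sum>p\<leftarrow>merge_pairs l. poly_act L R p y) = (\<Sum>p\<leftarrow>l. poly_act L R p y)"
  by (induct l rule: merge_pairs.induct) (auto simp: poly_act_merge algebra_simps)

lemma poly_act_merge_all: "poly_act L R (merge_all l) y = (\<Sum>p\<leftarrow>l. poly_act L R p y)"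
proof (induct l rule: merge_all.induct)
  case (3 a b r)
  then show ?case
    by (simp del: merge_pairs.simps add: poly_act_merge_pairs)
qed auto

fun collect_terms :: "act_poly \<Rightarrow> act_poly" where
  "collect_terms [] = []"
| "collect_terms [(c, w)] = (if c = 0 then [] else [(c, w)])"
| "collect_terms ((c, w) # (d, v) # r) =
     (if w = v then collect_terms ((c + d, w) # r)
      else if c = 0 then collect_terms ((d, v) # r) else (c, w) # collect_terms ((d, v) # r))"

lemma poly_act_collect_terms: "poly_act L R (collect_terms p) y = poly_act L R p y"
  by (induct p rule: collect_terms.induct) (auto simp: algebra_simps)

definition normalize_poly :: "act_poly \<Rightarrow> act_poly" where
  "normalize_poly p = collect_terms (merge_all (map (\<lambda>x. [x]) p))"

lemma poly_act_normalize: "poly_act L R (normalize_poly p) y = poly_act L R p y"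
proof -
  have "(\<Sum>q\<leftarrow>map (\<lambda>x. [x]) p. poly_act L R q y) = poly_act L R p y"
    by (induct p) auto
  then show ?thesis
    by (simp add: normalize_poly_def poly_act_collect_terms poly_act_merge_all)
qed

text \<open>Left multiplications by \<open>e\<^sub>1, \<dots>, e\<^sub>7\<close> anticommute and square to \<open>-1\<close>; this rewrites a word
  of such letters to a signed increasing one.\<close>

fun clifford_insert :: "nat \<Rightarrow> nat list \<Rightarrow> int \<times> nat list" where
  "clifford_insert a [] = (1, [a])"
| "clifford_insert a (b # r) =
     (if 1 \<le> a \<and> a \<le> 7 \<and> 1 \<le> b \<and> b \<le> 7 then
        (if a < b then (1, a # b # r) else if a = b then (-1, r)
         else (case clifford_insert a r of (s, r') \<Rightarrow> (- s, b # r')))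
      else (1, a # b # r))"

fun clifford_nf :: "nat list \<Rightarrow> int \<times> nat list" where
  "clifford_nf [] = (1, [])"
| "clifford_nf (a # w) =
     (case clifford_nf w of (s, w') \<Rightarrow> case clifford_insert a w' of (s', w'') \<Rightarrow> (s * s', w''))"

definition clifford_nf_poly :: "act_poly \<Rightarrow> act_poly" where
  "clifford_nf_poly p = map (\<lambda>(c, w). case clifford_nf w of (s, w') \<Rightarrow> (c * s, w')) p"

definition left_word :: "nat \<Rightarrow> nat list" where
  "left_word a = (if a = 0 then [] else [a])"

definition right_word :: "nat \<Rightarrow> nat list" where
  "right_word a = (if a = 0 then [] else [a + 7])"

definition assocL_poly :: "nat \<Rightarrow> nat \<Rightarrow> act_poly" where
  "assocL_poly a b = [(mul_sign a b, left_word (mul_idx a b)), (-1, left_word a @ left_word b)]"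

definition assocM_poly :: "nat \<Rightarrow> nat \<Rightarrow> act_poly" where
  "assocM_poly b a = [(1, right_word a @ left_word b), (-1, left_word b @ right_word a)]"

definition assocR_poly :: "nat \<Rightarrow> nat \<Rightarrow> act_poly" where
  "assocR_poly a b = [(1, right_word b @ right_word a), (- mul_sign a b, right_word (mul_idx a b))]"

definition relation_poly :: "nat \<Rightarrow> nat \<Rightarrow> nat \<Rightarrow> act_poly" where
  "relation_poly k a b =
     (if k = 0 then assocL_poly a b @ poly_scale (-1) (assocM_poly b a)
      else if k = 1 then assocM_poly b a @ poly_scale (-1) (assocR_poly a b)
      else assocL_poly a b @ assocL_poly b a)"

text \<open>An entry \<open>(c, u, k, a, b, v)\<close> of a certificate stands for \<open>c\<close> times the relation \<open>k\<close> at
  \<open>e\<^sub>a, e\<^sub>b\<close>, preceded by the word \<open>u\<close> and followed by \<open>v\<close>; it acts as zero on every bimodule.\<close>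

type_synonym relation_cert = "(int \<times> nat list \<times> nat \<times> nat \<times> nat \<times> nat list) list"

definition cert_term :: "int \<times> nat list \<times> nat \<times> nat \<times> nat \<times> nat list \<Rightarrow> act_poly" where
  "cert_term g = (case g of (c, u, k, a, b, v) \<Rightarrow>
     poly_scale c (poly_prefix u (poly_suffix v (relation_poly k a b))))"

definition cert_valid :: "int \<Rightarrow> act_poly \<Rightarrow> relation_cert \<Rightarrow> bool" where
  "cert_valid m t G \<longleftrightarrow> m \<noteq> 0 \<and> list_all (\<lambda>(c, u, k, a, b, v). a < 8 \<and> b < 8) G \<and>
     normalize_poly (clifford_nf_poly (poly_scale m t @ poly_scale (-1) (concat (map cert_term G)))) = []"

text \<open>Substituting for each right letter \<open>a + 7\<close> a polynomial in left letters representing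
  \<open>2 R\<^sub>e\<^sub>a\<close>; words with fewer than \<open>k\<close> right letters are scaled so that everything is
  multiplied by \<open>2\<^sup>k\<close>.\<close>

fun subst_word :: "(nat \<Rightarrow> act_poly) \<Rightarrow> nat list \<Rightarrow> act_poly" where
  "subst_word ps [] = [(1, [])]"
| "subst_word ps (a # w) =
     (if 8 \<le> a \<and> a \<le> 14 then poly_mult (ps (a - 7)) (subst_word ps w)
      else poly_mult [(1, [a])] (subst_word ps w))"

definition right_letters :: "nat list \<Rightarrow> nat" where
  "right_letters w = length (filter (\<lambda>a. 8 \<le> a \<and> a \<le> 14) w)"

definition subst_poly :: "(nat \<Rightarrow> act_poly) \<Rightarrow> nat \<Rightarrow> act_poly \<Rightarrow> act_poly" where
  "subst_poly ps k p =
     concat (map (\<lambda>(c, w). poly_scale (c * 2 ^ (k - right_letters w)) (subst_word ps w)) p)"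

locale oct_bimod =
  fixes L :: "oct \<Rightarrow> 'v::real_vector \<Rightarrow> 'v" and R :: "'v \<Rightarrow> oct \<Rightarrow> 'v"
  assumes oct_bimodule: "oct_bimodule L R"
begin

lemma L_linear: "linear (L p)"
  and L_linear_oct: "linear (\<lambda>p. L p x)"
  and R_linear: "linear (\<lambda>x. R x p)"
  and R_linear_oct: "linear (R x)"
  and L_one: "L oone x = x"
  and R_one: "R x oone = x"
  and assocL_eq_assocM: "assocL L p q x = assocM L R q x p"
  and assocM_eq_assocR: "assocM L R q x p = assocR R x p q"
  and assocL_antisym: "assocL L p q x = - assocL L q p x"
  using oct_bimodule unfolding oct_bimodule_def by blast+

lemmas L_add = linear_add[OF L_linear]
  and L_scaleR = linear_scale[OF L_linear]
  and L_neg = linear_neg[OF L_linear]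
  and L_zero = linear_0[OF L_linear]
  and L_sum = linear_sum[OF L_linear, unfolded o_def]
  and R_add = linear_add[OF R_linear]
  and R_scaleR = linear_scale[OF R_linear]
  and R_zero = linear_0[OF R_linear]
  and R_sum = linear_sum[OF R_linear, unfolded o_def]
  and L_add_oct = linear_add[OF L_linear_oct]
  and L_scaleR_oct = linear_scale[OF L_linear_oct]
  and L_neg_oct = linear_neg[OF L_linear_oct]
  and L_zero_oct = linear_0[OF L_linear_oct]
  and L_sum_oct = linear_sum[OF L_linear_oct, unfolded o_def]
  and R_scaleR_oct = linear_scale[OF R_linear_oct]
  and R_sum_oct = linear_sum[OF R_linear_oct, unfolded o_def]

lemma L_basis_anticommute:
  assumes "0 < a" "a < 8" "0 < b" "b < 8"
  shows "L (obasis a) (L (obasis b) y) + L (obasis b) (L (obasis a) y) = (if a = b then - 2 *\<^sub>R y else 0)"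
proof -
  have "L (obasis a) (L (obasis b) y) + L (obasis b) (L (obasis a) y)
      = L (omul (obasis a) (obasis b) + omul (obasis b) (obasis a)) y"
    using assocL_antisym[of "obasis a" "obasis b" y] by (simp add: assocL_def L_add_oct algebra_simps)
  then show ?thesis
    using omul_basis_anticommute[OF assms] by (simp add: L_neg_oct L_scaleR_oct L_one L_zero_oct)
qed

lemma L_basis_square:
  assumes "0 < a" "a < 8"
  shows "L (obasis a) (L (obasis a) y) = - y"
proof -
  have "2 *\<^sub>R L (obasis a) (L (obasis a) y) = 2 *\<^sub>R (- y)"
    using L_basis_anticommute[OF assms assms, of y] by (simp add: scaleR_2)
  then show ?thesis
    by (simp only: scaleR_cancel_left) simp
qed

lemma L_basis_anticommute_ne:
  "0 < a \<Longrightarrow> a < 8 \<Longrightarrow> 0 < b \<Longrightarrow> b < 8 \<Longrightarrow> a \<noteq> b \<Longrightarrow>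
    L (obasis a) (L (obasis b) y) = - L (obasis b) (L (obasis a) y)"
  using L_basis_anticommute[of a b y] by (simp add: eq_neg_iff_add_eq_0)

lemma letter_act_linear: "linear (letter_act L R a)"
  unfolding letter_act_def using L_linear R_linear by (cases "a \<le> 7") auto

lemma word_act_linear: "linear (word_act L R w)"
proof (induct w)
  case Nil
  then show ?case by (simp add: linear_id[unfolded id_def])
next
  case (Cons a w)
  have "word_act L R (a # w) = letter_act L R a \<circ> word_act L R w"
    by auto
  then show ?case
    using linear_compose[OF Cons letter_act_linear] by metis
qed

lemmas word_act_add = linear_add[OF word_act_linear]
  and word_act_scaleR = linear_scale[OF word_act_linear]
  and word_act_zero = linear_0[OF word_act_linear]

lemma poly_act_prefix: "poly_act L R (poly_prefix u p) y = word_act L R u (poly_act L R p y)"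
  by (induct p) (auto simp: poly_prefix_def word_act_append word_act_add word_act_zero word_act_scaleR)

lemma poly_act_poly_mult: "poly_act L R (poly_mult p q) y = poly_act L R p (poly_act L R q y)"
proof (induct p)
  case Nil
  then show ?case by (simp add: poly_mult_def)
next
  case (Cons x p)
  obtain c u where x: "x = (c, u)"
    by (cases x) auto
  have "poly_act L R (map (\<lambda>(d, v). (c * d, u @ v)) q) y = of_int c *\<^sub>R word_act L R u (poly_act L R q y)"
    by (induct q) (auto simp: word_act_append word_act_add word_act_scaleR word_act_zero scaleR_add_right)
  with Cons show ?case
    by (simp add: poly_mult_def x)
qed

lemma poly_act_linear: "linear (poly_act L R p)"
proof (induct p)
  case Nil
  then show ?case by (simp add: poly_act_def linear_zero)
next
  case (Cons x p)
  obtain c w where x: "x = (c, w)"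
    by (cases x) auto
  have "poly_act L R (x # p) = (\<lambda>y. of_int c *\<^sub>R word_act L R w y + poly_act L R p y)"
    by (rule ext) (simp add: x)
  then show ?case
    using Cons word_act_linear by (simp add: linear_compose_add linear_compose_scale_right)
qed

lemma poly_act_relation_poly:
  assumes "a < 8" "b < 8"
  shows "poly_act L R (relation_poly k a b) z = 0"
proof -
  have left: "word_act L R (left_word c) z = L (obasis c) z"
    and right: "word_act L R (right_word c) z = R z (obasis c)" if "c < 8" for c z
    using that by (auto simp: left_word_def right_word_def letter_act_def L_one[unfolded oone_def]
        R_one[unfolded oone_def])
  have "poly_act L R (assocL_poly a b) z = assocL L (obasis a) (obasis b) z"
    and "poly_act L R (assocL_poly b a) z = assocL L (obasis b) (obasis a) z"
    and "poly_act L R (assocM_poly b a) z = assocM L R (obasis b) z (obasis a)"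
    and "poly_act L R (assocR_poly a b) z = assocR R z (obasis a) (obasis b)"
    using assms
    by (simp_all add: assocL_poly_def assocM_poly_def assocR_poly_def assocL_def assocM_def assocR_def
        word_act_append left right mul_idx_less omul_basis L_scaleR_oct R_scaleR_oct)
  note acts = this
  consider "k = 0" | "k = 1" | "k \<noteq> 0" "k \<noteq> 1"
    by blast
  then show ?thesis
  proof cases
    case 1
    then show ?thesis
      using assocL_eq_assocM[of "obasis a" "obasis b" z] by (simp add: relation_poly_def acts)
  next
    case 2
    then show ?thesis
      using assocM_eq_assocR[of "obasis b" z "obasis a"] by (simp add: relation_poly_def acts)
  next
    case 3
    then show ?thesis
      using assocL_antisym[of "obasis a" "obasis b" z] by (simp add: relation_poly_def acts)
  qed
qed

lemma poly_act_cert_terms: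
  "list_all (\<lambda>(c, u, k, a, b, v). a < 8 \<and> b < 8) G \<Longrightarrow> poly_act L R (concat (map cert_term G)) z = 0"
  by (induct G)
    (auto simp: cert_term_def poly_act_prefix poly_act_suffix poly_act_relation_poly word_act_zero)

lemma clifford_insert_sound:
  "clifford_insert a r = (s, r') \<Longrightarrow> letter_act L R a (word_act L R r y) = of_int s *\<^sub>R word_act L R r' y"
proof (induct r arbitrary: s r')
  case Nil
  then show ?case by auto
next
  case (Cons b r)
  show ?case
  proof (cases "1 \<le> a \<and> a \<le> 7 \<and> 1 \<le> b \<and> b \<le> 7")
    case letters: True
    consider "a < b" | "a = b" | "b < a"
      by linarith
    then show ?thesis
    proof cases
      case 1
      with Cons.prems letters show ?thesis by auto
    next
      case 2
      with Cons.prems letters show ?thesis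
        by (auto simp: letter_act_def L_basis_square)
    next
      case 3
      obtain s0 r0 where ins: "clifford_insert a r = (s0, r0)"
        by (cases "clifford_insert a r") auto
      with Cons.prems letters 3 have "s = - s0" "r' = b # r0"
        by auto
      moreover have "L (obasis a) (word_act L R r y) = of_int s0 *\<^sub>R word_act L R r0 y"
        using Cons.hyps[OF ins] letters by (simp add: letter_act_def)
      ultimately show ?thesis
        using letters 3 by (simp add: letter_act_def L_basis_anticommute_ne L_scaleR)
    qed
  next
    case False
    with Cons.prems show ?thesis by auto
  qed
qed

lemma clifford_nf_sound: "clifford_nf w = (s, w') \<Longrightarrow> word_act L R w y = of_int s *\<^sub>R word_act L R w' y"
proof (induct w arbitrary: s w')
  case Nil
  then show ?case by auto
next
  case (Cons a w)
  obtain s1 w1 where nf: "clifford_nf w = (s1, w1)"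
    by (cases "clifford_nf w") auto
  obtain s2 w2 where ins: "clifford_insert a w1 = (s2, w2)"
    by (cases "clifford_insert a w1") auto
  have "word_act L R (a # w) y = letter_act L R a (of_int s1 *\<^sub>R word_act L R w1 y)"
    using Cons.hyps[OF nf] by simp
  also have "\<dots> = of_int s1 *\<^sub>R (of_int s2 *\<^sub>R word_act L R w2 y)"
    using clifford_insert_sound[OF ins] by (simp add: linear_scale[OF letter_act_linear])
  finally show ?case
    using Cons.prems nf ins by auto
qed

lemma poly_act_clifford_nf_poly: "poly_act L R (clifford_nf_poly p) y = poly_act L R p y"
proof (induct p)
  case Nil
  then show ?case by (simp add: clifford_nf_poly_def)
next
  case (Cons x p)
  obtain c w where x: "x = (c, w)"
    by (cases x) auto
  obtain s w' where nf: "clifford_nf w = (s, w')"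
    by (cases "clifford_nf w") auto
  show ?case
    using Cons clifford_nf_sound[OF nf, of y] by (simp add: clifford_nf_poly_def x nf)
qed

lemma poly_act_eq_0_if_cert_valid:
  assumes "cert_valid m t G"
  shows "poly_act L R t y = 0"
proof -
  have "poly_act L R (poly_scale m t @ poly_scale (-1) (concat (map cert_term G))) y = 0"
    using assms poly_act_normalize[of L R _ y] poly_act_clifford_nf_poly[of _ y]
    unfolding cert_valid_def by (metis poly_act_Nil)
  then have "of_int m *\<^sub>R poly_act L R t y = 0"
    using assms poly_act_cert_terms unfolding cert_valid_def by simp
  then show ?thesis
    using assms unfolding cert_valid_def by simp
qed

context
  fixes ps :: "nat \<Rightarrow> act_poly"
  assumes ps_right_mult: "\<And>i z. 1 \<le> i \<Longrightarrow> i \<le> 7 \<Longrightarrow> poly_act L R (ps i) z = 2 *\<^sub>R R z (obasis i)"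
begin

lemma poly_act_subst_word: "poly_act L R (subst_word ps w) y = 2 ^ right_letters w *\<^sub>R word_act L R w y"
proof (induct w)
  case Nil
  then show ?case by (simp add: right_letters_def)
next
  case (Cons a w)
  show ?case
  proof (cases "8 \<le> a \<and> a \<le> 14")
    case True
    then have "1 \<le> a - 7" "a - 7 \<le> 7"
      by auto
    with True Cons have "poly_act L R (subst_word ps (a # w)) y
        = 2 *\<^sub>R R (2 ^ right_letters w *\<^sub>R word_act L R w y) (obasis (a - 7))"
      by (simp add: poly_act_poly_mult ps_right_mult)
    then show ?thesis
      using True by (simp add: right_letters_def R_scaleR letter_act_def)
  next
    case False
    then have "subst_word ps (a # w) = poly_mult [(1, [a])] (subst_word ps w)"
      by (simp only: subst_word.simps if_False)
    moreover have "right_letters (a # w) = right_letters w"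
      using False by (simp add: right_letters_def)
    ultimately show ?thesis
      using Cons by (simp add: poly_act_poly_mult linear_scale[OF letter_act_linear] del: subst_word.simps)
  qed
qed

lemma poly_act_subst_poly:
  assumes "list_all (\<lambda>(c, w). right_letters w \<le> k) p"
  shows "poly_act L R (subst_poly ps k p) y = 2 ^ k *\<^sub>R poly_act L R p y"
  using assms
proof (induct p)
  case Nil
  then show ?case by (simp add: subst_poly_def)
next
  case (Cons x p)
  obtain c w where x: "x = (c, w)"
    by (cases x) auto
  with Cons.prems have "(2::real) ^ (k - right_letters w) * 2 ^ right_letters w = 2 ^ k"
    by (simp flip: power_add)
  then have "of_int (c * 2 ^ (k - right_letters w)) *\<^sub>R (2 ^ right_letters w *\<^sub>R word_act L R w y)
      = 2 ^ k *\<^sub>R (of_int c *\<^sub>R word_act L R w y)"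
    by (simp add: algebra_simps)
  with Cons show ?case
    by (simp add: subst_poly_def x poly_act_subst_word scaleR_add_right)
qed

lemma poly_act_eq_0_if_subst_normalizes:
  assumes "list_all (\<lambda>(c, w). right_letters w \<le> k) t"
    and "normalize_poly (clifford_nf_poly (subst_poly ps k t)) = []"
  shows "poly_act L R t y = 0"
proof -
  have "poly_act L R (subst_poly ps k t) y = 0"
    using assms(2) poly_act_normalize[of L R _ y] poly_act_clifford_nf_poly[of _ y] by (metis poly_act_Nil)
  then show ?thesis
    using poly_act_subst_poly[OF assms(1)] by simp
qed

end

end

section \<open>Three certified identities\<close>

definition re_poly :: act_poly where
  "re_poly = [(5, []), (-1, [1, 8]), (-1, [2, 9]), (-1, [3, 10]), (-1, [4, 11]), (-1, [5, 12]), (-1, [6, 13]),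
    (-1, [7, 14])]"

definition re_comm_poly :: "nat \<Rightarrow> act_poly" where
  "re_comm_poly j = poly_prefix [j] re_poly @ poly_scale (-1) (poly_prefix [j + 7] re_poly)"

definition re_decomp_poly :: act_poly where
  "re_decomp_poly = [(12, [])] @ poly_scale (-1) re_poly @
     concat (map (\<lambda>k. poly_prefix [k] (poly_suffix [k] re_poly)) [1, 2, 3, 4, 5, 6, 7])"

definition right_mult_poly :: "nat \<Rightarrow> act_poly" where
  "right_mult_poly i = [[(-1, [1]), (1, [2, 3]), (1, [4, 5]), (-1, [6, 7])],
     [(-1, [1, 3]), (-1, [2]), (1, [4, 6]), (1, [5, 7])],
     [(1, [1, 2]), (-1, [3]), (1, [4, 7]), (-1, [5, 6])],
     [(-1, [1, 5]), (-1, [2, 6]), (-1, [3, 7]), (-1, [4])],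
     [(1, [1, 4]), (-1, [2, 7]), (1, [3, 6]), (-1, [5])],
     [(1, [1, 7]), (1, [2, 4]), (-1, [3, 5]), (-1, [6])],
     [(-1, [1, 6]), (1, [2, 5]), (1, [3, 4]), (-1, [7])]] ! (i - 1)"

definition right_mult_rel_poly :: "nat \<Rightarrow> act_poly" where
  "right_mult_rel_poly i = [(2, [i + 7])] @ poly_scale (-1) (right_mult_poly i)"

definition right_mult_certs :: "relation_cert list" where
  "right_mult_certs =
    [[(1,[],0,2,6,[12]), (1,[],1,2,6,[12]), (1,[],0,3,2,[]), (-1,[],0,5,2,[6]), (-1,[6],0,5,2,[]),
      (-1,[13],1,5,2,[]), (-1,[],0,5,4,[]), (-1,[],1,5,4,[]), (-2,[],0,5,6,[2]), (-1,[],1,5,6,[2]),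
      (1,[2],1,5,6,[]), (1,[],0,6,2,[12]), (1,[],0,7,6,[]), (1,[],1,7,6,[])],
     [(1,[],0,1,3,[]), (-1,[],0,3,5,[11]), (-1,[],1,3,5,[11]), (1,[],0,4,3,[5]), (1,[5],0,4,3,[]),
      (1,[12],1,4,3,[]), (2,[],0,4,5,[3]), (1,[],1,4,5,[3]), (-1,[3],1,4,5,[]), (1,[],0,4,6,[]),
      (1,[],1,4,6,[]), (-1,[],0,5,3,[11]), (-1,[],0,7,5,[]), (-1,[],1,7,5,[])],
     [(-1,[],0,1,2,[]), (1,[],0,2,5,[11]), (1,[],1,2,5,[11]), (-1,[],0,4,2,[5]), (-1,[5],0,4,2,[]),
      (-1,[12],1,4,2,[]), (-2,[],0,4,5,[2]), (-1,[],1,4,5,[2]), (1,[2],1,4,5,[]), (1,[],0,4,7,[]),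
      (1,[],1,4,7,[]), (1,[],0,5,2,[11]), (1,[],0,6,5,[]), (1,[],1,6,5,[])],
     [(-1,[],0,1,5,[]), (-1,[],1,1,5,[]), (-1,[],0,2,5,[10]), (-1,[],1,2,5,[10]), (1,[],0,3,2,[5]),
      (1,[5],0,3,2,[]), (1,[12],1,3,2,[]), (2,[],0,3,5,[2]), (1,[],1,3,5,[2]), (-1,[2],1,3,5,[]),
      (-1,[],0,3,7,[]), (-1,[],1,3,7,[]), (-1,[],0,5,2,[10]), (-1,[],0,6,2,[])],
     [(1,[],0,1,4,[]), (1,[],1,1,4,[]), (1,[],0,2,4,[10]), (1,[],1,2,4,[10]), (-1,[],0,3,2,[4]),
      (-1,[4],0,3,2,[]), (-1,[11],1,3,2,[]), (-2,[],0,3,4,[2]), (-1,[],1,3,4,[2]), (1,[2],1,3,4,[]),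
      (1,[],0,3,6,[]), (1,[],1,3,6,[]), (1,[],0,4,2,[10]), (-1,[],0,7,2,[])],
     [(-1,[],0,1,4,[10]), (-1,[],1,1,4,[10]), (1,[],0,2,4,[]), (1,[],1,2,4,[]), (1,[],0,3,1,[4]),
      (1,[4],0,3,1,[]), (1,[11],1,3,1,[]), (2,[],0,3,4,[1]), (1,[],1,3,4,[1]), (-1,[1],1,3,4,[]),
      (-1,[],0,3,5,[]), (-1,[],1,3,5,[]), (-1,[],0,4,1,[10]), (1,[],0,7,1,[])],
     [(1,[],0,1,4,[9]), (1,[],1,1,4,[9]), (-1,[],0,2,1,[4]), (-1,[4],0,2,1,[]), (-1,[11],1,2,1,[]),
      (-2,[],0,2,4,[1]), (-1,[],1,2,4,[1]), (1,[1],1,2,4,[]), (1,[],0,2,5,[]), (1,[],1,2,5,[]),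
      (1,[],0,3,4,[]), (1,[],1,3,4,[]), (1,[],0,4,1,[9]), (-1,[],0,6,1,[])]]"

definition re_comm_certs :: "relation_cert list" where
  "re_comm_certs =
    [[(-1,[],0,1,1,[1]), (1,[8],0,1,1,[]), (-1,[],1,1,1,[1]), (1,[],1,1,2,[9]), (1,[],1,1,3,[10]),
      (1,[],1,1,4,[11]), (1,[],1,1,5,[12]), (1,[],1,1,6,[13]), (1,[],1,1,7,[14]), (-1,[9],0,2,1,[]),
      (-1,[2],1,2,1,[]), (-1,[9],1,2,1,[]), (1,[],0,2,2,[1]), (1,[],0,2,3,[]), (-2,[],0,2,6,[12]),
      (-2,[],1,2,6,[12]), (-1,[10],0,3,1,[]), (-1,[3],1,3,1,[]), (-1,[10],1,3,1,[]),
      (-3,[],0,3,2,[]), (1,[],0,3,3,[1]), (-1,[11],0,4,1,[]), (-1,[4],1,4,1,[]), (-1,[11],1,4,1,[]),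
      (1,[],0,4,4,[1]), (1,[],0,4,5,[]), (-1,[12],0,5,1,[]), (-1,[5],1,5,1,[]), (-1,[12],1,5,1,[]),
      (2,[],0,5,2,[6]), (2,[6],0,5,2,[]), (2,[13],1,5,2,[]), (1,[],0,5,4,[]), (2,[],1,5,4,[]),
      (1,[],0,5,5,[1]), (4,[],0,5,6,[2]), (2,[],1,5,6,[2]), (-2,[2],1,5,6,[]), (-1,[13],0,6,1,[]),
      (-1,[6],1,6,1,[]), (-1,[13],1,6,1,[]), (-2,[],0,6,2,[12]), (1,[],0,6,6,[1]), (-1,[],0,6,7,[]),
      (-1,[14],0,7,1,[]), (-1,[7],1,7,1,[]), (-1,[14],1,7,1,[]), (-1,[],0,7,6,[]), (-2,[],1,7,6,[]),
      (1,[],0,7,7,[1])],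
     [(1,[],0,1,1,[2]), (-2,[2],0,1,1,[]), (2,[9],0,1,1,[]), (1,[],1,1,1,[2]), (-1,[2],1,1,1,[]),
      (-3,[],0,1,2,[1]), (-1,[],0,1,2,[8]), (-1,[8],0,1,2,[]), (-2,[],1,1,2,[1]), (-3,[],0,1,3,[]),
      (2,[],1,1,3,[]), (-2,[],0,2,2,[2]), (2,[9],0,2,2,[]), (-2,[],1,2,2,[2]), (2,[],1,2,3,[10]),
      (2,[],1,2,4,[11]), (2,[],1,2,5,[12]), (2,[],1,2,6,[13]), (2,[],1,2,7,[14]), (2,[],0,3,1,[]),
      (2,[],1,3,1,[]), (-2,[10],0,3,2,[]), (-2,[3],1,3,2,[]), (-2,[10],1,3,2,[]), (2,[],0,3,3,[2]),
      (4,[],0,3,5,[11]), (4,[],1,3,5,[11]), (-2,[11],0,4,2,[]), (-2,[4],1,4,2,[]),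
      (-2,[11],1,4,2,[]), (-4,[],0,4,3,[5]), (-4,[5],0,4,3,[]), (-4,[12],1,4,3,[]),
      (2,[],0,4,4,[2]), (-8,[],0,4,5,[3]), (-4,[],1,4,5,[3]), (4,[3],1,4,5,[]), (-2,[],0,4,6,[]),
      (-4,[],1,4,6,[]), (-2,[12],0,5,2,[]), (-2,[5],1,5,2,[]), (-2,[12],1,5,2,[]),
      (4,[],0,5,3,[11]), (2,[],0,5,5,[2]), (2,[],0,5,7,[]), (-2,[13],0,6,2,[]), (-2,[6],1,6,2,[]),
      (-2,[13],1,6,2,[]), (-2,[],0,6,4,[]), (2,[],0,6,6,[2]), (-2,[14],0,7,2,[]), (-2,[7],1,7,2,[]),
      (-2,[14],1,7,2,[]), (2,[],0,7,5,[]), (4,[],1,7,5,[]), (2,[],0,7,7,[2])],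
     [(1,[],0,1,1,[3]), (-2,[3],0,1,1,[]), (2,[10],0,1,1,[]), (1,[],1,1,1,[3]), (-1,[3],1,1,1,[]),
      (3,[],0,1,2,[]), (-3,[],0,1,3,[1]), (-1,[],0,1,3,[8]), (-1,[8],0,1,3,[]), (-2,[],1,1,3,[1]),
      (1,[],0,2,1,[]), (1,[],0,2,2,[3]), (-2,[3],0,2,2,[]), (2,[10],0,2,2,[]), (1,[],1,2,2,[3]),
      (-1,[3],1,2,2,[]), (-3,[],0,2,3,[2]), (-1,[],0,2,3,[9]), (-1,[9],0,2,3,[]), (-2,[],1,2,3,[2]),
      (-4,[],0,2,5,[11]), (-4,[],1,2,5,[11]), (-2,[],0,3,3,[3]), (2,[10],0,3,3,[]),
      (-2,[],1,3,3,[3]), (2,[],1,3,4,[11]), (2,[],1,3,5,[12]), (2,[],1,3,6,[13]), (2,[],1,3,7,[14]),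
      (4,[],0,4,2,[5]), (4,[5],0,4,2,[]), (4,[12],1,4,2,[]), (-2,[11],0,4,3,[]), (-2,[4],1,4,3,[]),
      (-2,[11],1,4,3,[]), (2,[],0,4,4,[3]), (8,[],0,4,5,[2]), (4,[],1,4,5,[2]), (-4,[2],1,4,5,[]),
      (-2,[],0,4,7,[]), (-4,[],1,4,7,[]), (-4,[],0,5,2,[11]), (-2,[12],0,5,3,[]), (-2,[5],1,5,3,[]),
      (-2,[12],1,5,3,[]), (2,[],0,5,5,[3]), (-2,[],0,5,6,[]), (-2,[13],0,6,3,[]), (-2,[6],1,6,3,[]),
      (-2,[13],1,6,3,[]), (-2,[],0,6,5,[]), (-4,[],1,6,5,[]), (2,[],0,6,6,[3]), (-2,[14],0,7,3,[]),
      (-2,[7],1,7,3,[]), (-2,[14],1,7,3,[]), (-2,[],0,7,4,[]), (2,[],0,7,7,[3])],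
     [(1,[],0,1,1,[4]), (-2,[4],0,1,1,[]), (2,[11],0,1,1,[]), (1,[],1,1,1,[4]), (-1,[4],1,1,1,[]),
      (-3,[],0,1,4,[1]), (-1,[],0,1,4,[8]), (-1,[8],0,1,4,[]), (-2,[],1,1,4,[1]), (5,[],0,1,5,[]),
      (6,[],1,1,5,[]), (1,[],0,2,2,[4]), (-2,[4],0,2,2,[]), (2,[11],0,2,2,[]), (1,[],1,2,2,[4]),
      (-1,[4],1,2,2,[]), (-3,[],0,2,4,[2]), (-1,[],0,2,4,[9]), (-1,[9],0,2,4,[]), (-2,[],1,2,4,[2]),
      (4,[],0,2,5,[10]), (4,[],1,2,5,[10]), (1,[],0,2,6,[]), (2,[],1,2,6,[]), (-4,[],0,3,2,[5]),
      (-4,[5],0,3,2,[]), (-4,[12],1,3,2,[]), (1,[],0,3,3,[4]), (-2,[4],0,3,3,[]), (2,[11],0,3,3,[]),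
      (1,[],1,3,3,[4]), (-1,[4],1,3,3,[]), (-3,[],0,3,4,[3]), (-1,[],0,3,4,[10]),
      (-1,[10],0,3,4,[]), (-2,[],1,3,4,[3]), (-8,[],0,3,5,[2]), (-4,[],1,3,5,[2]), (4,[2],1,3,5,[]),
      (5,[],0,3,7,[]), (6,[],1,3,7,[]), (-2,[],0,4,4,[4]), (2,[11],0,4,4,[]), (-2,[],1,4,4,[4]),
      (2,[],1,4,5,[12]), (2,[],1,4,6,[13]), (2,[],1,4,7,[14]), (2,[],0,5,1,[]), (2,[],1,5,1,[]),
      (4,[],0,5,2,[10]), (-2,[12],0,5,4,[]), (-2,[5],1,5,4,[]), (-2,[12],1,5,4,[]),
      (2,[],0,5,5,[4]), (6,[],0,6,2,[]), (2,[],1,6,2,[]), (-2,[13],0,6,4,[]), (-2,[6],1,6,4,[]),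
      (-2,[13],1,6,4,[]), (2,[],0,6,6,[4]), (2,[],0,7,3,[]), (2,[],1,7,3,[]), (-2,[14],0,7,4,[]),
      (-2,[7],1,7,4,[]), (-2,[14],1,7,4,[]), (2,[],0,7,7,[4])],
     [(1,[],0,1,1,[5]), (-2,[5],0,1,1,[]), (2,[12],0,1,1,[]), (1,[],1,1,1,[5]), (-1,[5],1,1,1,[]),
      (-5,[],0,1,4,[]), (-4,[],1,1,4,[]), (-3,[],0,1,5,[1]), (-1,[],0,1,5,[8]), (-1,[8],0,1,5,[]),
      (-2,[],1,1,5,[1]), (1,[],0,2,2,[5]), (-2,[5],0,2,2,[]), (2,[12],0,2,2,[]), (1,[],1,2,2,[5]),
      (-1,[5],1,2,2,[]), (-4,[],0,2,4,[10]), (-4,[],1,2,4,[10]), (-3,[],0,2,5,[2]),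
      (-1,[],0,2,5,[9]), (-1,[9],0,2,5,[]), (-2,[],1,2,5,[2]), (1,[],0,2,7,[]), (2,[],1,2,7,[]),
      (4,[],0,3,2,[4]), (4,[4],0,3,2,[]), (4,[11],1,3,2,[]), (1,[],0,3,3,[5]), (-2,[5],0,3,3,[]),
      (2,[12],0,3,3,[]), (1,[],1,3,3,[5]), (-1,[5],1,3,3,[]), (8,[],0,3,4,[2]), (4,[],1,3,4,[2]),
      (-4,[2],1,3,4,[]), (-3,[],0,3,5,[3]), (-1,[],0,3,5,[10]), (-1,[10],0,3,5,[]),
      (-2,[],1,3,5,[3]), (-5,[],0,3,6,[]), (-6,[],1,3,6,[]), (1,[],0,4,1,[]), (-4,[],0,4,2,[10]),
      (1,[],0,4,4,[5]), (-2,[5],0,4,4,[]), (2,[12],0,4,4,[]), (1,[],1,4,4,[5]), (-1,[5],1,4,4,[]),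
      (-3,[],0,4,5,[4]), (-1,[],0,4,5,[11]), (-1,[11],0,4,5,[]), (-2,[],1,4,5,[4]),
      (-2,[],0,5,5,[5]), (2,[12],0,5,5,[]), (-2,[],1,5,5,[5]), (2,[],1,5,6,[13]), (2,[],1,5,7,[14]),
      (-2,[],0,6,3,[]), (-2,[],1,6,3,[]), (-2,[13],0,6,5,[]), (-2,[6],1,6,5,[]), (-2,[13],1,6,5,[]),
      (2,[],0,6,6,[5]), (6,[],0,7,2,[]), (2,[],1,7,2,[]), (-2,[14],0,7,5,[]), (-2,[7],1,7,5,[]),
      (-2,[14],1,7,5,[]), (2,[],0,7,7,[5])],
     [(1,[],0,1,1,[6]), (-2,[6],0,1,1,[]), (2,[13],0,1,1,[]), (1,[],1,1,1,[6]), (-1,[6],1,1,1,[]),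
      (4,[],0,1,4,[10]), (4,[],1,1,4,[10]), (-3,[],0,1,6,[1]), (-1,[],0,1,6,[8]), (-1,[8],0,1,6,[]),
      (-2,[],1,1,6,[1]), (-1,[],0,1,7,[]), (-2,[],1,1,7,[]), (1,[],0,2,2,[6]), (-2,[6],0,2,2,[]),
      (2,[13],0,2,2,[]), (1,[],1,2,2,[6]), (-1,[6],1,2,2,[]), (-5,[],0,2,4,[]), (-4,[],1,2,4,[]),
      (-3,[],0,2,6,[2]), (-1,[],0,2,6,[9]), (-1,[9],0,2,6,[]), (-2,[],1,2,6,[2]), (-4,[],0,3,1,[4]),
      (-4,[4],0,3,1,[]), (-4,[11],1,3,1,[]), (1,[],0,3,3,[6]), (-2,[6],0,3,3,[]), (2,[13],0,3,3,[]),
      (1,[],1,3,3,[6]), (-1,[6],1,3,3,[]), (-8,[],0,3,4,[1]), (-4,[],1,3,4,[1]), (4,[1],1,3,4,[]),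
      (5,[],0,3,5,[]), (4,[],1,3,5,[]), (-3,[],0,3,6,[3]), (-1,[],0,3,6,[10]), (-1,[10],0,3,6,[]),
      (-2,[],1,3,6,[3]), (4,[],0,4,1,[10]), (1,[],0,4,2,[]), (1,[],0,4,4,[6]), (-2,[6],0,4,4,[]),
      (2,[13],0,4,4,[]), (1,[],1,4,4,[6]), (-1,[6],1,4,4,[]), (-3,[],0,4,6,[4]), (-1,[],0,4,6,[11]),
      (-1,[11],0,4,6,[]), (-2,[],1,4,6,[4]), (-1,[],0,5,3,[]), (1,[],0,5,5,[6]), (-2,[6],0,5,5,[]),
      (2,[13],0,5,5,[]), (1,[],1,5,5,[6]), (-1,[6],1,5,5,[]), (-3,[],0,5,6,[5]), (-1,[],0,5,6,[12]),
      (-1,[12],0,5,6,[]), (-2,[],1,5,6,[5]), (-2,[],0,6,6,[6]), (2,[13],0,6,6,[]),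
      (-2,[],1,6,6,[6]), (2,[],1,6,7,[14]), (-6,[],0,7,1,[]), (-2,[],1,7,1,[]), (-2,[14],0,7,6,[]),
      (-2,[7],1,7,6,[]), (-2,[14],1,7,6,[]), (2,[],0,7,7,[6])],
     [(1,[],0,1,1,[7]), (-2,[7],0,1,1,[]), (2,[14],0,1,1,[]), (1,[],1,1,1,[7]), (-1,[7],1,1,1,[]),
      (-4,[],0,1,4,[9]), (-4,[],1,1,4,[9]), (1,[],0,1,6,[]), (-3,[],0,1,7,[1]), (-1,[],0,1,7,[8]),
      (-1,[8],0,1,7,[]), (-2,[],1,1,7,[1]), (4,[],0,2,1,[4]), (4,[4],0,2,1,[]), (4,[11],1,2,1,[]),
      (1,[],0,2,2,[7]), (-2,[7],0,2,2,[]), (2,[14],0,2,2,[]), (1,[],1,2,2,[7]), (-1,[7],1,2,2,[]),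
      (8,[],0,2,4,[1]), (4,[],1,2,4,[1]), (-4,[1],1,2,4,[]), (-5,[],0,2,5,[]), (-4,[],1,2,5,[]),
      (-3,[],0,2,7,[2]), (-1,[],0,2,7,[9]), (-1,[9],0,2,7,[]), (-2,[],1,2,7,[2]), (1,[],0,3,3,[7]),
      (-2,[7],0,3,3,[]), (2,[14],0,3,3,[]), (1,[],1,3,3,[7]), (-1,[7],1,3,3,[]), (-5,[],0,3,4,[]),
      (-4,[],1,3,4,[]), (-3,[],0,3,7,[3]), (-1,[],0,3,7,[10]), (-1,[10],0,3,7,[]),
      (-2,[],1,3,7,[3]), (-4,[],0,4,1,[9]), (1,[],0,4,3,[]), (1,[],0,4,4,[7]), (-2,[7],0,4,4,[]),
      (2,[14],0,4,4,[]), (1,[],1,4,4,[7]), (-1,[7],1,4,4,[]), (-3,[],0,4,7,[4]), (-1,[],0,4,7,[11]),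
      (-1,[11],0,4,7,[]), (-2,[],1,4,7,[4]), (1,[],0,5,2,[]), (1,[],0,5,5,[7]), (-2,[7],0,5,5,[]),
      (2,[14],0,5,5,[]), (1,[],1,5,5,[7]), (-1,[7],1,5,5,[]), (-3,[],0,5,7,[5]), (-1,[],0,5,7,[12]),
      (-1,[12],0,5,7,[]), (-2,[],1,5,7,[5]), (3,[],0,6,1,[]), (1,[],0,6,6,[7]), (-2,[7],0,6,6,[]),
      (2,[14],0,6,6,[]), (1,[],1,6,6,[7]), (-1,[7],1,6,6,[]), (-3,[],0,6,7,[6]), (-1,[],0,6,7,[13]),
      (-1,[13],0,6,7,[]), (-2,[],1,6,7,[6]), (-2,[],0,7,7,[7]), (2,[14],0,7,7,[]),
      (-2,[],1,7,7,[7])]]"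

lemma right_mult_certs_valid:
  "list_all (\<lambda>i. cert_valid 1 (right_mult_rel_poly i) (right_mult_certs ! (i - 1))) [1..<8]"
  by code_simp

lemma re_comm_certs_valid:
  "list_all (\<lambda>j. cert_valid (if j = 1 then 1 else 2) (re_comm_poly j) (re_comm_certs ! (j - 1))) [1..<8]"
  by code_simp

lemma re_decomp_subst_normalizes:
  "list_all (\<lambda>(c, w). right_letters w \<le> 1) re_decomp_poly"
  "normalize_poly (clifford_nf_poly (subst_poly right_mult_poly 1 re_decomp_poly)) = []"
  by code_simp+

context oct_bimod
begin

lemma poly_act_right_mult_poly:
  assumes "1 \<le> i" "i \<le> 7"
  shows "poly_act L R (right_mult_poly i) z = 2 *\<^sub>R R z (obasis i)"
proof -
  have "cert_valid 1 (right_mult_rel_poly i) (right_mult_certs ! (i - 1))"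
    using right_mult_certs_valid assms by (auto simp: list_all_iff)
  then have "poly_act L R (right_mult_rel_poly i) z = 0"
    by (rule poly_act_eq_0_if_cert_valid)
  then show ?thesis
    using assms by (simp add: right_mult_rel_poly_def letter_act_def)
qed

lemma re_comm_identity:
  assumes "1 \<le> j" "j \<le> 7"
  shows "L (obasis j) (poly_act L R re_poly y) = R (poly_act L R re_poly y) (obasis j)"
proof -
  have "cert_valid (if j = 1 then 1 else 2) (re_comm_poly j) (re_comm_certs ! (j - 1))"
    using re_comm_certs_valid assms by (auto simp: list_all_iff)
  then have "poly_act L R (re_comm_poly j) y = 0"
    by (rule poly_act_eq_0_if_cert_valid)
  then show ?thesis
    using assms by (simp add: re_comm_poly_def poly_act_prefix letter_act_def)
qed

lemma re_decomp_identity: "(\<Sum>k<8. L (obasis k) (poly_act L R re_poly (L (ocnj (obasis k)) y))) = 12 *\<^sub>R y"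
proof -
  have "poly_act L R re_decomp_poly y = 0"
    by (rule poly_act_eq_0_if_subst_normalizes[OF poly_act_right_mult_poly re_decomp_subst_normalizes])
  then show ?thesis
    unfolding sum_lessThan_8
    by (simp add: re_decomp_poly_def poly_act_prefix poly_act_suffix letter_act_def ocnj_basis mul_sign_diag
        L_one[unfolded oone_def] L_neg_oct L_neg linear_neg[OF poly_act_linear] algebra_simps)
qed

end

section \<open>The real part of an octonion bimodule\<close>

definition re_proj :: "(oct \<Rightarrow> 'v::real_vector \<Rightarrow> 'v) \<Rightarrow> ('v \<Rightarrow> oct \<Rightarrow> 'v) \<Rightarrow> 'v \<Rightarrow> 'v" where
  "re_proj L R y = (1 / 12) *\<^sub>R (5 *\<^sub>R y - (\<Sum>i\<in>{1..7}. L (obasis i) (R y (obasis i))))"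

definition re_coord :: "(oct \<Rightarrow> 'v::real_vector \<Rightarrow> 'v) \<Rightarrow> ('v \<Rightarrow> oct \<Rightarrow> 'v) \<Rightarrow> nat \<Rightarrow> 'v \<Rightarrow> 'v" where
  "re_coord L R k y = re_proj L R (L (ocnj (obasis k)) y)"

context oct_bimod
begin

lemma re_proj_eq_poly_act: "re_proj L R y = (1 / 12) *\<^sub>R poly_act L R re_poly y"
proof -
  have "{1..7::nat} = {1, 2, 3, 4, 5, 6, 7}"
    by auto
  then show ?thesis
    by (simp add: re_proj_def re_poly_def letter_act_def algebra_simps)
qed

lemma re_proj_linear: "linear (re_proj L R)"
  unfolding re_proj_eq_poly_act[abs_def] by (rule linear_compose_scale_right[OF poly_act_linear])

lemmas re_proj_diff = linear_diff[OF re_proj_linear]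
  and re_proj_scaleR = linear_scale[OF re_proj_linear]
  and re_proj_zero = linear_0[OF re_proj_linear]
  and re_proj_sum = linear_sum[OF re_proj_linear, unfolded o_def]

lemma ReM_commute: "m \<in> ReM L R \<Longrightarrow> L p m = R m p"
  and ReM_assocL: "m \<in> ReM L R \<Longrightarrow> assocL L p q m = 0"
  unfolding ReM_def by blast+

lemma ReM_assoc: "m \<in> ReM L R \<Longrightarrow> L p (L q m) = L (omul p q) m"
  using ReM_assocL[of m p q] by (simp add: assocL_def)

lemma ReM_right_mult:
  assumes "m \<in> ReM L R"
  shows "R (L p m) q = L (omul p q) m"
proof -
  have "assocM L R p m q = 0"
    using ReM_assocL[OF assms, of q p] by (simp add: assocL_eq_assocM)
  then have "R (L p m) q = L p (R m q)"
    by (simp add: assocM_def)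
  then show ?thesis
    using assms by (simp add: ReM_commute[symmetric] ReM_assoc)
qed

text \<open>Commuting with all octonions already forces the associators \<open>[p, q, m]\<close> to vanish: together
  with commutation the bimodule axioms give \<open>[p, q, m] = 2 [q, p, m]\<close>, against \<open>[p, q, m] = - [q, p, m]\<close>.\<close>

lemma ReM_if_commute:
  assumes comm: "\<And>p. L p m = R m p"
  shows "m \<in> ReM L R"
proof -
  have "assocL L p q m = 0" for p q
  proof -
    have "assocM L R q m p = assocR R m q p + assocL L q p m"
      unfolding assocM_def assocR_def assocL_def using comm by (simp add: algebra_simps)
    then have "assocL L p q m = 2 *\<^sub>R assocL L q p m"
      using assocL_eq_assocM[of p q m] assocM_eq_assocR[of p m q] assocL_eq_assocM[of q p m]
      by (simp add: scaleR_2)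
    then have "2 *\<^sub>R assocL L q p m = (-1) *\<^sub>R assocL L q p m"
      using assocL_antisym[of p q m] by simp
    then have "assocL L q p m = 0"
      by (simp only: scaleR_cancel_right) simp
    then show ?thesis
      using assocL_antisym[of p q m] by simp
  qed
  with comm show ?thesis
    by (simp add: ReM_def)
qed

lemma subspace_ReM: "subspace (ReM L R)"
  unfolding subspace_def
  by (auto intro!: ReM_if_commute simp: ReM_commute L_zero R_zero L_add R_add L_scaleR R_scaleR)

lemma re_proj_basis_mult:
  assumes m: "m \<in> ReM L R" and t: "t < 8"
  shows "re_proj L R (L (obasis t) m) = (if t = 0 then m else 0)"
proof -
  let ?c = "\<lambda>i. real_of_int (mul_sign t i * mul_sign i (mul_idx t i))"
  have "L (obasis i) (R (L (obasis t) m) (obasis i)) = ?c i *\<^sub>R L (obasis t) m" if i: "i \<in> {1..7}" for i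
  proof -
    have "L (obasis i) (R (L (obasis t) m) (obasis i)) = L (omul (obasis i) (omul (obasis t) (obasis i))) m"
      using m by (simp add: ReM_right_mult ReM_assoc)
    also have "\<dots> = ?c i *\<^sub>R L (obasis t) m"
      using i t basis_sandwich(1)[OF t]
      by (simp add: omul_basis omul_scaleR_right mul_idx_less L_scaleR_oct mult.commute)
    finally show ?thesis .
  qed
  then have "(\<Sum>i\<in>{1..7}. L (obasis i) (R (L (obasis t) m) (obasis i))) = (\<Sum>i\<in>{1..7}. ?c i) *\<^sub>R L (obasis t) m"
    by (simp add: scaleR_sum_left)
  also have "(\<Sum>i\<in>{1..7}. ?c i) = of_int (\<Sum>i\<in>{1..7}. mul_sign t i * mul_sign i (mul_idx t i))"
    by (simp only: of_int_sum)
  also have "\<dots> = (if t = 0 then -7 else 5)"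
    using basis_sandwich(2)[OF t] by simp
  finally show ?thesis
    using L_one[of m] by (simp add: re_proj_def oone_def flip: scaleR_add_left)
qed

lemma re_proj_mult:
  assumes "m \<in> ReM L R"
  shows "re_proj L R (L q m) = ocoord q 0 *\<^sub>R m"
proof -
  have "re_proj L R (L q m) = (\<Sum>k<8. ocoord q k *\<^sub>R (if k = 0 then m else 0))"
    using assms by (subst oct_decomp[of q]) (simp add: L_sum_oct L_scaleR_oct re_proj_sum re_proj_scaleR re_proj_basis_mult)
  then show ?thesis
    by (simp add: if_distrib[of "\<lambda>x. _ *\<^sub>R x"] cong: if_cong)
qed

lemma re_proj_in_ReM: "re_proj L R y \<in> ReM L R"
proof (rule ReM_if_commute)
  fix p
  let ?m = "re_proj L R y"
  have basis: "L (obasis k) ?m = R ?m (obasis k)" if "k < 8" for k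
  proof (cases "k = 0")
    case True
    then show ?thesis using L_one R_one by (simp add: oone_def)
  next
    case False
    with that show ?thesis
      using re_comm_identity[of k y] by (simp add: re_proj_eq_poly_act L_scaleR R_scaleR)
  qed
  have "L p ?m = (\<Sum>k<8. ocoord p k *\<^sub>R L (obasis k) ?m)"
    by (subst oct_decomp[of p]) (simp add: L_sum_oct L_scaleR_oct)
  also have "\<dots> = (\<Sum>k<8. ocoord p k *\<^sub>R R ?m (obasis k))"
    using basis by simp
  also have "\<dots> = R ?m p"
    by (subst (2) oct_decomp[of p]) (simp add: R_sum_oct R_scaleR_oct)
  finally show "L p ?m = R ?m p" .
qed

lemma re_coord_in_ReM: "re_coord L R k y \<in> ReM L R"
  unfolding re_coord_def by (rule re_proj_in_ReM)

lemma re_coord_linear: "linear (re_coord L R k)"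
  unfolding re_coord_def[abs_def] by (rule linear_compose[OF L_linear re_proj_linear, unfolded o_def])

lemma re_coord_decomp: "y = (\<Sum>k<8. L (obasis k) (re_coord L R k y))"
  using re_decomp_identity[of y] by (simp add: re_coord_def re_proj_eq_poly_act L_scaleR flip: scaleR_sum_right)

lemma re_coord_unique:
  assumes c: "\<And>j. j < 8 \<Longrightarrow> c j \<in> ReM L R" and y: "y = (\<Sum>j<8. L (obasis j) (c j))" and t: "t < 8"
  shows "re_coord L R t y = c t"
proof -
  have "re_coord L R t y = (\<Sum>j<8. re_proj L R (L (omul (ocnj (obasis t)) (obasis j)) (c j)))"
    using c by (simp add: re_coord_def y L_sum re_proj_sum ReM_assoc)
  also have "\<dots> = (\<Sum>j<8. if j = t then c j else 0)"
  proof (rule sum.cong[OF refl])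
    fix j :: nat
    assume "j \<in> {..<8}"
    with t c show "re_proj L R (L (omul (ocnj (obasis t)) (obasis j)) (c j)) = (if j = t then c j else 0)"
      by (simp add: ocnj_basis omul_scaleR_left omul_basis L_scaleR_oct re_proj_scaleR re_proj_basis_mult
          mul_idx_less mul_idx_eq_0_iff mul_sign_diag_sq eq_commute[of t j])
  qed
  also have "\<dots> = c t"
    using t by simp
  finally show ?thesis .
qed

lemma re_coords_eq: "re_coords L R y = (\<lambda>i. if i < 8 then re_coord L R i y else 0)"
  unfolding re_coords_def
proof (rule the_equality)
  fix c
  assume "(\<forall>i<8. c i \<in> ReM L R) \<and> (\<forall>i\<ge>8. c i = 0) \<and> y = (\<Sum>i<8. L (obasis i) (c i))"
  then show "c = (\<lambda>i. if i < 8 then re_coord L R i y else 0)"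
    using re_coord_unique[of c y] by (auto simp: not_less)
qed (use re_coord_decomp[of y] re_coord_in_ReM in auto)

lemma ReV_eq_re_proj: "ReV L R y = re_proj L R y"
  by (simp add: ReV_def re_coords_eq re_coord_def ocnj_basis mul_sign_diag L_one[unfolded oone_def])

end

section \<open>Right para-linear operators\<close>

context oct_bimod
begin

lemma re_coord_eq_right_mult:
  assumes k: "k < 8"
  shows "re_coord L R k y = re_proj L R (R y (ocnj (obasis k)))"
proof -
  let ?c = "\<lambda>j. re_coord L R j y"
  have "R y (ocnj (obasis k)) = (\<Sum>j<8. L (omul (obasis j) (ocnj (obasis k))) (?c j))"
    by (subst re_coord_decomp[of y]) (simp add: R_sum ReM_right_mult re_coord_in_ReM)
  then have "re_proj L R (R y (ocnj (obasis k))) = (\<Sum>j<8. ocoord (omul (obasis j) (ocnj (obasis k))) 0 *\<^sub>R ?c j)"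
    by (simp add: re_proj_sum re_proj_mult re_coord_in_ReM)
  also have "\<dots> = (\<Sum>j<8. if j = k then ?c j else 0)"
    using k by (intro sum.cong) (auto simp: ocnj_basis omul_scaleR_right ocoord_scaleR ocoord_0_omul_basis mul_sign_diag_sq)
  finally show ?thesis
    using k by simp
qed

lemma eq_if_re_proj_right_mult_eq:
  assumes "\<And>k. k < 8 \<Longrightarrow> re_proj L R (R y (obasis k)) = re_proj L R (R z (obasis k))"
  shows "y = z"
proof -
  have "re_coord L R k y = re_coord L R k z" if "k < 8" for k
    using assms that by (simp add: re_coord_eq_right_mult ocnj_basis R_scaleR_oct re_proj_scaleR)
  then show ?thesis
    using re_coord_decomp[of y] re_coord_decomp[of z] by simp
qed

lemma re_proj_assocR_basis:
  assumes i: "i < 8" and k: "k < 8"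
  shows "re_proj L R (assocR R w (obasis i) (obasis k)) = 0"
proof -
  let ?c = "\<lambda>j. re_coord L R j w"
  have "assocR R w (obasis i) (obasis k) =
      (\<Sum>j<8. L (omul (omul (obasis j) (obasis i)) (obasis k)) (?c j)
        - L (omul (obasis j) (omul (obasis i) (obasis k))) (?c j))"
    unfolding assocR_def
    by (subst (1 2) re_coord_decomp[of w]) (simp add: R_sum ReM_right_mult re_coord_in_ReM sum_subtractf)
  then show ?thesis
    using i k by (simp add: re_proj_sum re_proj_diff re_proj_mult re_coord_in_ReM ocoord_0_omul_assoc_basis)
qed

lemma re_proj_right_mult_commute:
  assumes "right_para_linear L R f"
  shows "re_proj L R (R (f x) p) = re_proj L R (f (R x p))"
proof -
  have "ReV L R (Bp R f p x) = 0"
    using assms unfolding right_para_linear_def by blast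
  then show ?thesis
    by (simp add: ReV_eq_re_proj Bp_def re_proj_diff)
qed

lemma right_para_linear_left_mult_basis:
  assumes f: "right_para_linear L R f" and m: "m \<in> ReM L R" and i: "i < 8"
  shows "f (L (obasis i) m) = R (f m) (obasis i)"
proof (rule eq_if_re_proj_right_mult_eq)
  fix k :: nat
  assume k: "k < 8"
  have "re_proj L R (R (f (L (obasis i) m)) (obasis k)) = re_proj L R (f (L (omul (obasis i) (obasis k)) m))"
    using re_proj_right_mult_commute[OF f] m by (simp add: ReM_right_mult)
  also have "\<dots> = re_proj L R (R (f m) (omul (obasis i) (obasis k)))"
    using re_proj_right_mult_commute[OF f] m by (simp add: ReM_commute)
  also have "\<dots> = re_proj L R (R (R (f m) (obasis i)) (obasis k))"
    using re_proj_assocR_basis[OF i k, of "f m"] by (simp add: assocR_def re_proj_diff)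
  finally show "re_proj L R (R (f (L (obasis i) m)) (obasis k)) = re_proj L R (R (R (f m) (obasis i)) (obasis k))" .
qed

lemma oext_eq_sum_re_coord: "oext L R h x = (\<Sum>i<8. R (h (re_coord L R i x)) (obasis i))"
  by (simp add: oext_def re_coords_eq)

lemma oext_right_para_linear:
  assumes f: "right_para_linear L R f"
  shows "oext L R f = f"
proof
  fix x
  have "linear f"
    using f by (simp add: right_para_linear_def)
  have "oext L R f x = (\<Sum>i<8. f (L (obasis i) (re_coord L R i x)))"
    by (simp add: oext_eq_sum_re_coord right_para_linear_left_mult_basis[OF f] re_coord_in_ReM)
  also have "\<dots> = f x"
    by (subst (2) re_coord_decomp[of x]) (simp add: linear_sum[OF \<open>linear f\<close>] o_def)
  finally show "oext L R f x = f x" .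
qed

lemma oext_sum_left_mult:
  fixes q :: "nat \<Rightarrow> oct"
  assumes h: "linear h" and d: "\<And>i. i < 8 \<Longrightarrow> d i \<in> ReM L R"
  shows "oext L R h (\<Sum>i<8. L (q i) (d i)) = (\<Sum>i<8. R (h (d i)) (q i))"
proof -
  let ?z = "\<Sum>i<8. L (q i) (d i)"
  let ?D = "\<lambda>t. \<Sum>i<8. ocoord (q i) t *\<^sub>R d i"
  have "?z = (\<Sum>i<8. \<Sum>t<8. ocoord (q i) t *\<^sub>R L (obasis t) (d i))"
    by (subst (1) oct_decomp) (simp add: L_sum_oct L_scaleR_oct)
  also have "\<dots> = (\<Sum>t<8. L (obasis t) (?D t))"
    by (subst sum.swap) (simp add: L_sum L_scaleR)
  finally have z: "?z = (\<Sum>t<8. L (obasis t) (?D t))" .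
  have "?D t \<in> ReM L R" for t
    using d by (auto intro!: subspace_sum[OF subspace_ReM] subspace_scale[OF subspace_ReM])
  then have "re_coord L R t ?z = ?D t" if "t < 8" for t
    using re_coord_unique[OF _ z that] by blast
  then have "oext L R h ?z = (\<Sum>t<8. \<Sum>i<8. ocoord (q i) t *\<^sub>R R (h (d i)) (obasis t))"
    by (simp add: oext_eq_sum_re_coord linear_sum[OF h] linear_scale[OF h] o_def R_sum R_scaleR)
  also have "\<dots> = (\<Sum>i<8. R (h (d i)) (\<Sum>t<8. ocoord (q i) t *\<^sub>R obasis t))"
    by (subst sum.swap) (simp add: R_sum_oct R_scaleR_oct)
  also have "\<dots> = (\<Sum>i<8. R (h (d i)) (q i))"
    by (simp flip: oct_decomp)
  finally show ?thesis .
qed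

lemma oext_linear:
  assumes h: "linear h"
  shows "linear (oext L R h)"
proof (rule linearI)
  show "oext L R h (x + y) = oext L R h x + oext L R h y" for x y
    by (simp add: oext_eq_sum_re_coord linear_add[OF re_coord_linear] linear_add[OF h] R_add sum.distrib)
  show "oext L R h (r *\<^sub>R x) = r *\<^sub>R oext L R h x" for r x
    by (simp add: oext_eq_sum_re_coord linear_scale[OF re_coord_linear] linear_scale[OF h] R_scaleR
        scaleR_sum_right)
qed

lemma Bp_ocoord_decomp:
  assumes "linear f"
  shows "Bp R f p x = (\<Sum>k<8. ocoord p k *\<^sub>R Bp R f (obasis k) x)"
proof -
  have "Bp R f p x = R (f x) (\<Sum>k<8. ocoord p k *\<^sub>R obasis k) - f (R x (\<Sum>k<8. ocoord p k *\<^sub>R obasis k))"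
    by (simp add: Bp_def flip: oct_decomp)
  also have "\<dots> = (\<Sum>k<8. ocoord p k *\<^sub>R Bp R f (obasis k) x)"
    by (simp add: Bp_def R_sum_oct R_scaleR_oct linear_sum[OF assms] linear_scale[OF assms] o_def
        scaleR_diff_right sum_subtractf)
  finally show ?thesis .
qed

lemma right_para_linear_oext:
  assumes h: "linear h"
  shows "right_para_linear L R (oext L R h)"
proof -
  have basis: "re_proj L R (Bp R (oext L R h) (obasis k) x) = 0" if k: "k < 8" for k x
  proof -
    let ?c = "\<lambda>i. re_coord L R i x"
    have "R x (obasis k) = (\<Sum>i<8. L (omul (obasis i) (obasis k)) (?c i))"
      by (subst re_coord_decomp[of x]) (simp add: R_sum ReM_right_mult re_coord_in_ReM)
    then have "oext L R h (R x (obasis k)) = (\<Sum>i<8. R (h (?c i)) (omul (obasis i) (obasis k)))"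
      using oext_sum_left_mult[OF h, of ?c] by (simp add: re_coord_in_ReM)
    then have "Bp R (oext L R h) (obasis k) x = (\<Sum>i<8. assocR R (h (?c i)) (obasis i) (obasis k))"
      by (simp add: Bp_def oext_eq_sum_re_coord R_sum assocR_def sum_subtractf)
    then show ?thesis
      using k by (simp add: re_proj_sum re_proj_assocR_basis)
  qed
  show ?thesis
    unfolding right_para_linear_def
  proof (intro conjI allI)
    show "linear (oext L R h)"
      by (rule oext_linear[OF h])
    show "ReV L R (Bp R (oext L R h) p x) = 0" for p x
      unfolding ReV_eq_re_proj
      by (subst Bp_ocoord_decomp[OF oext_linear[OF h]]) (simp add: re_proj_sum re_proj_scaleR basis)
  qed
qed

lemma right_para_linear_iff_oext_eq:
  assumes "linear f"
  shows "right_para_linear L R f \<longleftrightarrow> oext L R f = f"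
  using oext_right_para_linear right_para_linear_oext[OF assms] by auto

lemma olif_ReV_comp:
  assumes f: "right_para_linear L R f"
  shows "olif L R (ReV L R \<circ> f) = f"
proof
  fix x
  have "olif L R (ReV L R \<circ> f) x = (\<Sum>i<8. R (re_coord L R i (f x)) (obasis i))"
    unfolding olif_def
    by (intro sum.cong) (simp_all add: ReV_eq_re_proj re_proj_right_mult_commute[OF f, symmetric]
        re_coord_eq_right_mult)
  also have "\<dots> = f x"
    by (subst (2) re_coord_decomp[of "f x"]) (simp add: ReM_commute re_coord_in_ReM)
  finally show "olif L R (ReV L R \<circ> f) x = f x" .
qed

lemma right_para_linear_id: "right_para_linear L R id"
  unfolding right_para_linear_def by (simp add: Bp_def ReV_eq_re_proj re_proj_zero) (rule linear_id)

lemma oassoc_eq_0_iff: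
  assumes "linear f" "linear g"
  shows "(\<forall>x. oassoc L R f g x = 0) \<longleftrightarrow> right_para_linear L R (f \<circ> g)"
  using right_para_linear_iff_oext_eq[OF linear_compose[OF assms(2,1)]]
  by (simp add: oassoc_def ocomp_def fun_eq_iff)

end

section \<open>Powers of a right para-linear operator\<close>

lemma bounded_linear_funpow:
  fixes T :: "'a::real_normed_vector \<Rightarrow> 'a"
  assumes "bounded_linear T"
  shows "bounded_linear (T ^^ n)"
proof (induct n)
  case 0
  show ?case
    by (simp add: id_def)
next
  case (Suc n)
  then show ?case
    using bounded_linear_compose[OF assms] by (simp add: o_def)
qed

lemma linear_funpow:
  fixes T :: "'a::real_vector \<Rightarrow> 'a"
  assumes "linear T"
  shows "linear (T ^^ n)"
proof (induct n)
  case 0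
  show ?case
    by (simp add: linear_ident)
next
  case (Suc n)
  then show ?case
    using linear_compose[OF Suc assms] by (simp add: o_def)
qed

lemma all_iff_all_by_step:
  assumes "P 0" and "\<And>n. P n \<Longrightarrow> Q n \<longleftrightarrow> P (Suc n)"
  shows "(\<forall>n. Q n) \<longleftrightarrow> (\<forall>n. P n)"
proof
  assume Q: "\<forall>n. Q n"
  show "\<forall>n. P n"
  proof
    show "P n" for n
      by (induct n) (use assms Q in auto)
  qed
qed (use assms in blast)

context oct_bimod
begin

lemma pow_ext_eq: "right_para_linear L R (T ^^ n) \<Longrightarrow> pow_ext L R T n = T ^^ n"
  by (simp add: pow_ext_def oext_right_para_linear)

lemma pow_lif_eq: "right_para_linear L R (T ^^ n) \<Longrightarrow> pow_lif L R T n = T ^^ n"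
  by (simp add: pow_lif_def olif_ReV_comp)

lemma oassoc_pow_ext_eq_0_iff:
  assumes "linear T"
  shows "(\<forall>n x. oassoc L R T (pow_ext L R T n) x = 0) \<longleftrightarrow> (\<forall>n. right_para_linear L R (T ^^ n))"
proof (rule all_iff_all_by_step)
  show "right_para_linear L R (T ^^ 0)"
    by (simp add: right_para_linear_id)
  show "(\<forall>x. oassoc L R T (pow_ext L R T n) x = 0) \<longleftrightarrow> right_para_linear L R (T ^^ Suc n)"
    if "right_para_linear L R (T ^^ n)" for n
    using that oassoc_eq_0_iff[OF assms linear_funpow[OF assms]] by (simp add: pow_ext_eq)
qed

lemma oassoc_pow_lif_eq_0_iff:
  assumes "linear T"
  shows "(\<forall>n x. oassoc L R (pow_lif L R T n) T x = 0) \<longleftrightarrow> (\<forall>n. right_para_linear L R (T ^^ n))"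
proof (rule all_iff_all_by_step)
  show "right_para_linear L R (T ^^ 0)"
    by (simp add: right_para_linear_id)
  show "(\<forall>x. oassoc L R (pow_lif L R T n) T x = 0) \<longleftrightarrow> right_para_linear L R (T ^^ Suc n)"
    if "right_para_linear L R (T ^^ n)" for n
    using that oassoc_eq_0_iff[OF linear_funpow[OF assms] assms]
    by (simp add: pow_lif_eq funpow_Suc_right del: funpow.simps)
qed

lemma ocomp_funpow:
  "right_para_linear L R (T ^^ (n + m)) \<Longrightarrow> ocomp L R (T ^^ n) (T ^^ m) = T ^^ (n + m)"
  by (simp add: ocomp_def oext_right_para_linear flip: funpow_add)

end

theorem mainTheorem2:
  fixes L :: "oct \<Rightarrow> 'v::banach \<Rightarrow> 'v" and R :: "'v \<Rightarrow> oct \<Rightarrow> 'v" and T :: "'v \<Rightarrow> 'v"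
  assumes "banach_oct_bimodule L R"
    and "T \<in> B_RO L R"
  shows "((\<forall>n::nat. \<forall>x. oassoc L R T (pow_ext L R T n) x = 0)
            \<longleftrightarrow> (\<forall>n::nat. T ^^ n \<in> B_RO L R))
       \<and> ((\<forall>n::nat. T ^^ n \<in> B_RO L R)
            \<longleftrightarrow> (\<forall>n::nat. \<forall>x. oassoc L R (pow_lif L R T n) T x = 0))
       \<and> ((\<forall>n::nat. T ^^ n \<in> B_RO L R) \<longrightarrow>
            (\<forall>n::nat. pow_ext L R T n = T ^^ n \<and> T ^^ n = pow_lif L R T n) \<and>
            (\<forall>n m::nat. ocomp L R (T ^^ n) (T ^^ m) = T ^^ (n + m)))"
proof -
  interpret oct_bimod L R
    using assms(1) by unfold_locales (simp add: banach_oct_bimodule_def)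
  have T: "bounded_linear T"
    using assms(2) by (simp add: B_RO_def)
  then have powers: "T ^^ n \<in> B_RO L R \<longleftrightarrow> right_para_linear L R (T ^^ n)" for n
    by (simp add: B_RO_def bounded_linear_funpow)
  have "linear T"
    using T bounded_linear.linear by blast
  then show ?thesis
    unfolding powers oassoc_pow_ext_eq_0_iff[OF \<open>linear T\<close>] oassoc_pow_lif_eq_0_iff[OF \<open>linear T\<close>]
    by (simp add: pow_ext_eq pow_lif_eq ocomp_funpow)
qed

end
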